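(* For every $\tau$ with $0<\tau<1$, $$R(\tau)\ \le\ \overline{R}(\tau):=\min_{0\le\tau'\le\tau}\ \max\Big\{r\in[0,1]:\ h(v)\le 1-v\,h\Big(\min\Big(\tfrac{\tau-\tau'}{v(1-\tau')},\tfrac12\Big)\Big)\Big\},$$ where, for given $r$ and $\tau'$, $v=v(r,\tau')$ denotes the real number with $0\le v\le 1/2$ and $h(v)(1-\tau')=r$.
   Context: $h(x)=-x\log_2x-(1-x)\log_2(1-x)$ is the binary entropy function. Binary Z-channel with noiseless feedback: an input $0$ is always received as $0$; an input $1$ is received as $1$ or (an error) as $0$. A feedback encoding strategy of blocklength $n$ for a finite message set $\mathcal M$ consists of functions $c_i:\mathcal M\times\{0,1\}^{i-1}\to\{0,1\}$, $i=1,\dots,n$; when sending $m$ the $i$-th transmitted symbol is $c_i(m,y^{i-1})$, with $y^{i-1}$ the previously received symbols. Let $c(m,y^{n-1})=(c_1(m),\dots,c_n(m,y^{n-1}))$ and $\mathcal Y^n_t(m)=\{y^n\in\{0,1\}^n:y_i\le c_i(m,y^{i-1})\ \forall i,\ d_H(y^n,c(m,y^{n-1}))\le t\}$. The strategy is successful if the sets $\mathcal Y^n_t(m)$, $m\in\mathcal M$, are pairwise disjoint. $M(n,t)$ is the maximum $|\mathcal M|$ admitting a successful strategy of blocklength $n$ with at most $t$ errors, and $R(\tau):=\limsup_{n\to\infty}\frac1n\log_2M(n,\lceil\tau n\rceil)$. *)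

theory Defs
  imports "HOL-Analysis.Analysis"
begin

definition h :: "real \<Rightarrow> real" where
  "h x = (if x \<le> 0 \<or> x \<ge> 1 then 0 else - x * log 2 x - (1 - x) * log 2 (1 - x))"

text \<open>Messages are 0..K-1. A feedback strategy is c m ys, the symbol sent for message m
  after having received the prefix ys; the index i (0-based) is length ys.
  True = symbol 1, False = symbol 0.\<close>

definition Yset :: "(nat \<Rightarrow> bool list \<Rightarrow> bool) \<Rightarrow> nat \<Rightarrow> nat \<Rightarrow> nat \<Rightarrow> bool list set" where
  "Yset c n t m = {ys. length ys = n \<and>
      (\<forall>i<n. ys ! i \<longrightarrow> c m (take i ys)) \<and>
      card {i. i < n \<and> ys ! i \<noteq> c m (take i ys)} \<le> t}"

definition successful :: "nat \<Rightarrow> nat \<Rightarrow> nat \<Rightarrow> (nat \<Rightarrow> bool list \<Rightarrow> bool) \<Rightarrow> bool" where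
  "successful n t K c \<longleftrightarrow>
     (\<forall>m<K. \<forall>m'<K. m \<noteq> m' \<longrightarrow> Yset c n t m \<inter> Yset c n t m' = {})"

definition Mmax :: "nat \<Rightarrow> nat \<Rightarrow> nat" where
  "Mmax n t = Max {K. \<exists>c. successful n t K c}"

definition Rate :: "real \<Rightarrow> ereal" where
  "Rate \<tau> = limsup (\<lambda>n. ereal (log 2 (real (Mmax n (nat \<lceil>\<tau> * real n\<rceil>))) / real n))"

text \<open>Admissible rates r for given tau and tau': r in [0,1], v = v(r,tau') exists
  (0 <= v <= 1/2, h v * (1 - tau') = r; it is unique when tau' < 1) and the inequality holds.\<close>
definition admissible :: "real \<Rightarrow> real \<Rightarrow> real \<Rightarrow> bool" where
  "admissible \<tau> \<tau>' r \<longleftrightarrow> 0 \<le> r \<and> r \<le> 1 \<and>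
     (\<exists>v. 0 \<le> v \<and> v \<le> 1/2 \<and> h v * (1 - \<tau>') = r \<and>
          h v \<le> 1 - v * h (min ((\<tau> - \<tau>') / (v * (1 - \<tau>'))) (1/2)))"

definition Rbar :: "real \<Rightarrow> real" where
  "Rbar \<tau> = (INF \<tau>'\<in>{0..\<tau>}. Sup {r. admissible \<tau> \<tau>' r})"

end

theory Submission
  imports Defs "HOL-Real_Asymp.Real_Asymp"
begin

text \<open>
  The channel plays an erasing adversary. For tau' <= tau it turns the ones among the first
  z = floor(tau' n) transmitted symbols into zeros; this costs at most z errors and leaves
  N = n - z symbols with about (tau - tau') n errors to spend. Put W = ceil(v N). A message
  with some remaining output of weight below W is identified by that output, and there are
  at most 2^(N h(v)) binary words of length N and weight at most v N. Every other message
  sends at least W ones on each of its outputs, and since the channel may flip any k of the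
  first W ones it owns at least (W choose k) >= 2^(W h(k/W)) / (W + 1) outputs, where
  k = min((tau - tau') n, W/2). The output sets are disjoint, so
  M <= 2^(N h(v)) + 2^N / (W choose k), which yields
  R(tau) <= (1 - tau') max(h(v), 1 - v h(q)) with q = min((tau - tau') / (v (1 - tau')), 1/2).
  If r < 1 - tau' is not admissible, the v with (1 - tau') h(v) = r violates the admissibility
  inequality, so the maximum is h(v) and R(tau) <= r. Hence R(tau) is bounded by the supremum
  of the admissible rates for every tau', and so by their infimum over tau'.
\<close>

section \<open>Outputs of a feedback strategy\<close>

text \<open>Recursive counterparts of the conditions in Yset: after receiving y, the strategy f
  of a single message continues as \<lambda>zs. f (y # zs).\<close>

fun receivable :: "(bool list \<Rightarrow> bool) \<Rightarrow> bool list \<Rightarrow> bool" where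
  "receivable f [] = True"
| "receivable f (y # ys) = ((y \<longrightarrow> f []) \<and> receivable (\<lambda>zs. f (y # zs)) ys)"

fun errors :: "(bool list \<Rightarrow> bool) \<Rightarrow> bool list \<Rightarrow> nat" where
  "errors f [] = 0"
| "errors f (y # ys) = (if y = f [] then 0 else 1) + errors (\<lambda>zs. f (y # zs)) ys"

fun ones_sent :: "(bool list \<Rightarrow> bool) \<Rightarrow> bool list \<Rightarrow> nat" where
  "ones_sent f [] = 0"
| "ones_sent f (y # ys) = (if f [] then 1 else 0) + ones_sent (\<lambda>zs. f (y # zs)) ys"

definition weight :: "bool list \<Rightarrow> nat" where
  "weight ys = length (filter id ys)"

definition outputs :: "(bool list \<Rightarrow> bool) \<Rightarrow> nat \<Rightarrow> nat \<Rightarrow> bool list set" where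
  "outputs f n t = {ys. length ys = n \<and> receivable f ys \<and> errors f ys \<le> t}"

lemma receivable_iff: "receivable f ys \<longleftrightarrow> (\<forall>i<length ys. ys ! i \<longrightarrow> f (take i ys))"
  by (induction ys arbitrary: f) (auto simp: less_Suc_eq_0_disj)

lemma errors_eq_card: "errors f ys = card {i. i < length ys \<and> ys ! i \<noteq> f (take i ys)}"
proof -
  have "errors f ys = (\<Sum>i<length ys. of_bool (ys ! i \<noteq> f (take i ys)))"
    by (induction ys arbitrary: f)
      (simp_all add: sum.lessThan_Suc_shift del: sum_of_bool_eq sum.lessThan_Suc)
  also have "\<dots> = card {i. i < length ys \<and> ys ! i \<noteq> f (take i ys)}"
    by (simp add: Int_def)
  finally show ?thesis .
qed

lemma Yset_eq_outputs: "Yset c n t m = outputs (c m) n t"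
  unfolding Yset_def outputs_def by (auto simp: receivable_iff errors_eq_card)

lemma receivable_append: "receivable f (xs @ ys) \<longleftrightarrow> receivable f xs \<and> receivable (\<lambda>zs. f (xs @ zs)) ys"
  by (induction xs arbitrary: f) auto

lemma errors_append: "errors f (xs @ ys) = errors f xs + errors (\<lambda>zs. f (xs @ zs)) ys"
  by (induction xs arbitrary: f) auto

lemma receivable_replicate_False: "receivable f (replicate n False)"
  by (induction n arbitrary: f) auto

lemma errors_le_length: "errors f ys \<le> length ys"
  by (induction ys arbitrary: f) (fastforce intro: le_SucI)+

lemma weight_le_ones_sent: "receivable f ys \<Longrightarrow> weight ys \<le> ones_sent f ys"
proof (induction ys arbitrary: f)
  case (Cons y ys)
  then have "weight ys \<le> ones_sent (\<lambda>zs. f (y # zs)) ys" by simp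
  then show ?case using Cons.prems by (auto simp: weight_def)
qed (simp add: weight_def)

lemma finite_outputs: "finite (outputs f n t)"
  by (rule finite_subset[OF _ finite_lists_length_eq[of UNIV n]]) (auto simp: outputs_def)

lemma outputs_mono: "t \<le> t' \<Longrightarrow> outputs f n t \<subseteq> outputs f n t'"
  by (auto simp: outputs_def)

lemma outputs_nonempty: "outputs f n t \<noteq> {}"
proof (induction n arbitrary: f)
  case (Suc n)
  then obtain ys where "ys \<in> outputs (\<lambda>zs. f (f [] # zs)) n t"
    by blast
  then have "f [] # ys \<in> outputs f (Suc n) t"
    by (simp add: outputs_def)
  then show ?case
    by blast
qed (auto simp: outputs_def)

lemma outputs_Suc_send1:
  assumes "f []"
  shows "outputs f (Suc n) (Suc t) =
    Cons True ` outputs (\<lambda>zs. f (True # zs)) n (Suc t) \<union> Cons False ` outputs (\<lambda>zs. f (False # zs)) n t"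
  using assms by (auto simp: outputs_def length_Suc_conv image_iff split: if_splits)

lemma outputs_Suc_send0:
  assumes "\<not> f []"
  shows "outputs f (Suc n) t = Cons False ` outputs (\<lambda>zs. f (False # zs)) n t"
  using assms by (auto simp: outputs_def length_Suc_conv image_iff split: if_splits)

text \<open>The channel may flip any t of the first W ones sent.\<close>
lemma choose_le_card_outputs:
  assumes "\<forall>ys\<in>outputs f n t. W \<le> ones_sent f ys"
  shows "W choose t \<le> card (outputs f n t)"
  using assms
proof (induction n arbitrary: f W t)
  case 0
  have "outputs f 0 t = {[]}"
    by (auto simp: outputs_def)
  with 0 have "W = 0"
    by simp
  with \<open>outputs f 0 t = {[]}\<close> show ?case
    by (cases t) auto
next
  case (Suc n)
  have one_le: "1 \<le> card (outputs f (Suc n) t)"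
    using outputs_nonempty finite_outputs by (simp add: Suc_le_eq card_gt_0_iff)
  show ?case
  proof (cases "f []")
    case False
    have "W choose t \<le> card (outputs (\<lambda>zs. f (False # zs)) n t)"
      using Suc.prems False by (intro Suc.IH) (auto simp: outputs_Suc_send0)
    then show ?thesis by (simp add: outputs_Suc_send0[of f, OF False] card_image)
  next
    case True
    show ?thesis
    proof (cases "W = 0 \<or> t = 0")
      case True
      then have "W choose t \<le> 1" by (cases t) auto
      then show ?thesis using one_le by linarith
    next
      case False
      then obtain W' t' where Wt: "W = Suc W'" "t = Suc t'" by (metis not0_implies_Suc)
      let ?A = "outputs (\<lambda>zs. f (True # zs)) n t" and ?B = "outputs (\<lambda>zs. f (False # zs)) n t'"
      have split: "outputs f (Suc n) t = Cons True ` ?A \<union> Cons False ` ?B"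
        using outputs_Suc_send1[of f, OF True] Wt by simp
      have heavy: "W \<le> ones_sent f (y # ys)" if "y # ys \<in> outputs f (Suc n) t" for y ys
        using Suc.prems that by blast
      have "W' choose t \<le> card ?A"
        using heavy[of True] True Wt by (intro Suc.IH) (auto simp: split[unfolded Wt])
      moreover have "W' choose t' \<le> card ?B"
        using heavy[of False] True Wt by (intro Suc.IH) (auto simp: split[unfolded Wt])
      moreover have "card (outputs f (Suc n) t) = card ?A + card ?B"
        unfolding split by (subst card_Un_disjoint) (auto simp: finite_outputs card_image)
      ultimately show ?thesis using Wt by (simp add: binomial_Suc_Suc)
    qed
  qed
qed

lemma append_zeros_outputs:
  assumes "z \<le> n" "z \<le> t"
  shows "(@) (replicate z False) ` outputs (\<lambda>zs. f (replicate z False @ zs)) (n - z) (t - z)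
           \<subseteq> outputs f n t"
  using assms errors_le_length[of f "replicate z False"]
  by (auto simp: outputs_def receivable_append errors_append receivable_replicate_False)

lemma h_eq: "0 < x \<Longrightarrow> x < 1 \<Longrightarrow> h x = - x * log 2 x - (1 - x) * log 2 (1 - x)"
  by (simp add: h_def)

lemma h_nonneg: "0 \<le> h x"
proof (cases "0 < x \<and> x < 1")
  case True
  then have "x * log 2 x \<le> 0" "(1 - x) * log 2 (1 - x) \<le> 0"
    by (simp_all add: mult_nonneg_nonpos)
  then show ?thesis using True by (simp add: h_def)
qed (auto simp: h_def)

lemma h_0: "h 0 = 0"
  by (simp add: h_def)

lemma h_half: "h (1/2) = 1"
  by (simp add: h_def log_divide)

lemma isCont_h:
  assumes "0 \<le> x" "x < 1"
  shows "isCont h x"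
proof -
  let ?H = "\<lambda>y::real. - y * log 2 y - (1 - y) * log 2 (1 - y)"
  have h_eq_H: "\<forall>\<^sub>F y in F. h y = ?H y" if "\<forall>\<^sub>F y in F. y \<in> {0<..<1}" for F
    using that by eventually_elim (simp add: h_def)
  show ?thesis
  proof (cases "x = 0")
    case True
    have "(?H \<longlongrightarrow> 0) (at_right 0)"
      unfolding log_def by real_asymp
    then have "(h \<longlongrightarrow> 0) (at_right 0)"
      using h_eq_H[OF eventually_at_right_real[of 0 1]] by (simp add: tendsto_cong)
    moreover have "(h \<longlongrightarrow> 0) (at_left 0)"
    proof (rule Lim_transform_eventually[OF tendsto_const])
      have "\<forall>\<^sub>F y in at_left 0. y \<in> {-1<..<0::real}"
        by (rule eventually_at_left_real) simp
      then show "\<forall>\<^sub>F y in at_left 0. 0 = h y"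
        by eventually_elim (simp add: h_def)
    qed
    ultimately show ?thesis
      using True by (simp add: isCont_def filterlim_at_split h_def)
  next
    case False
    have "\<forall>\<^sub>F y in nhds x. y \<in> {0<..<1}"
      using assms False by (intro eventually_nhds_in_open) auto
    then have "isCont h x \<longleftrightarrow> isCont ?H x"
      by (rule isCont_cong[OF h_eq_H])
    moreover have "isCont ?H x"
      using assms False by (intro continuous_intros) auto
    ultimately show ?thesis by simp
  qed
qed

section \<open>Entropy bounds for binary words and binomial coefficients\<close>

lemma finite_length_eq_bool: "finite {ys :: bool list. length ys = n}"
  using finite_lists_length_eq[of "UNIV :: bool set" n] by simp

lemma card_length_eq_bool: "card {ys :: bool list. length ys = n} = 2 ^ n"
  using card_lists_length_eq[of "UNIV :: bool set" n] by simp

lemma sum_weight_power: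
  "(\<Sum>ys | length ys = n. a ^ weight ys * b ^ (n - weight ys)) = (a + b :: 'a::comm_semiring_1) ^ n"
proof (induction n)
  case 0
  have "{ys :: bool list. length ys = 0} = {[]}" by auto
  then show ?case by (simp add: weight_def)
next
  case (Suc n)
  define X where "X = {ys :: bool list. length ys = n}"
  define g where "g m ys = a ^ weight ys * b ^ (m - weight ys)" for m ys
  have weight_le: "weight ys \<le> length ys" for ys
    by (simp add: weight_def)
  have "{ys. length ys = Suc n} = Cons True ` X \<union> Cons False ` X"
    by (auto simp: X_def length_Suc_conv image_iff)
  then have "sum (g (Suc n)) {ys. length ys = Suc n}
      = sum (g (Suc n)) (Cons True ` X) + sum (g (Suc n)) (Cons False ` X)"
    by (simp only:) (rule sum.union_disjoint, auto simp: X_def finite_length_eq_bool)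
  also have "\<dots> = (\<Sum>ys\<in>X. g (Suc n) (True # ys)) + (\<Sum>ys\<in>X. g (Suc n) (False # ys))"
    by (simp add: sum.reindex inj_on_def)
  also have "\<dots> = a * sum (g n) X + b * sum (g n) X"
  proof -
    have "g (Suc n) (True # ys) = a * g n ys" for ys
      by (simp add: g_def weight_def mult.assoc)
    moreover have "g (Suc n) (False # ys) = b * g n ys" if "ys \<in> X" for ys
      using that weight_le[of ys] by (simp add: g_def weight_def X_def Suc_diff_le mult.left_commute)
    ultimately show ?thesis
      by (simp add: sum_distrib_left)
  qed
  also have "\<dots> = (a + b) ^ Suc n"
    using Suc.IH by (simp add: g_def X_def distrib_right)
  finally show ?case by (simp add: g_def)
qed

lemma powr_log_mult: "0 < x \<Longrightarrow> 2 powr (c * log 2 x) = x powr c"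
  using powr_powr[of 2 "log 2 x" c] by (simp only: powr_log_cancel) (simp add: mult.commute)

lemma bernoulli_weight_eq_powr:
  assumes "0 < p" "p < 1"
  shows "p ^ a * (1 - p) ^ b = 2 powr (a * log 2 p + b * log 2 (1 - p))"
  using assms by (simp add: powr_add powr_log_mult powr_realpow)

lemma powr_neg_entropy_le_bernoulli_weight:
  fixes v :: real
  assumes "0 < v" "v \<le> 1/2" "a \<le> n" "real a \<le> v * n"
  shows "2 powr (- (n * h v)) \<le> v ^ a * (1 - v) ^ (n - a)"
proof -
  have "log 2 v \<le> log 2 (1 - v)"
    using assms by simp
  then have "0 \<le> (v * n - a) * (log 2 (1 - v) - log 2 v)"
    using assms by simp
  then have "- (n * h v) \<le> a * log 2 v + real (n - a) * log 2 (1 - v)"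
    using assms by (simp add: h_eq of_nat_diff algebra_simps)
  then show ?thesis
    using assms by (simp add: bernoulli_weight_eq_powr)
qed

lemma card_low_weight_le:
  fixes v :: real
  assumes "0 < v" "v \<le> 1/2"
  shows "card {ys. length ys = n \<and> weight ys \<le> v * n} \<le> 2 powr (n * h v)"
proof -
  define A where "A = {ys. length ys = n \<and> weight ys \<le> v * n}"
  define g where "g ys = v ^ weight ys * (1 - v) ^ (n - weight ys)" for ys
  have "card A * 2 powr (- (n * h v)) = (\<Sum>ys\<in>A. 2 powr (- (n * h v)))"
    by simp
  also have "\<dots> \<le> sum g A"
    using assms by (intro sum_mono) (auto simp: A_def g_def weight_def
      intro!: powr_neg_entropy_le_bernoulli_weight)
  also have "\<dots> \<le> sum g {ys. length ys = n}"
    using assms by (intro sum_mono2 finite_length_eq_bool) (auto simp: A_def g_def)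
  also have "\<dots> = 1"
    using sum_weight_power[where a = v and b = "1 - v"] by (simp add: g_def)
  finally show ?thesis
    by (simp add: A_def powr_minus divide_simps)
qed

lemma le_at_peak:
  fixes a :: "nat \<Rightarrow> 'a::preorder"
  assumes up: "\<And>i. i < k \<Longrightarrow> a i \<le> a (Suc i)"
    and down: "\<And>i. k \<le> i \<Longrightarrow> a (Suc i) \<le> a i"
  shows "a j \<le> a k"
proof (cases "j \<le> k")
  case True
  then show ?thesis
  proof (induction j rule: inc_induct)
    case (step i)
    then show ?case using up[of i] by (blast intro: order_trans)
  qed simp
next
  case False
  then have "k \<le> j" by simp
  then show ?thesis
  proof (induction j rule: dec_induct)
    case (step i)
    then show ?case using down[of i] by (blast intro: order_trans)
  qed simp
qed

lemma Suc_times_choose_Suc: "Suc j * (n choose Suc j) = (n - j) * (n choose j)"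
  by (simp only: binomial_absorption binomial_absorb_comp)

lemma binomial_term_Suc:
  fixes p :: real
  shows "(W choose Suc j) * p ^ Suc j * (1 - p) ^ (W - Suc j) * (Suc j * (1 - p))
       = (W choose j) * p ^ j * (1 - p) ^ (W - j) * ((real W - j) * p)"
proof (cases "j < W")
  case True
  have C: "real (Suc j) * (W choose Suc j) = (real W - j) * (W choose j)"
    using Suc_times_choose_Suc[of j W] True by (metis of_nat_diff of_nat_mult less_imp_le)
  have Q: "(1 - p) ^ (W - j) = (1 - p) * (1 - p) ^ (W - Suc j)"
    using True by (simp flip: power_Suc add: Suc_diff_Suc)
  have "(W choose Suc j) * p ^ Suc j * (1 - p) ^ (W - Suc j) * (Suc j * (1 - p))
      = (real (Suc j) * (W choose Suc j)) * p ^ j * (1 - p) ^ (W - Suc j) * ((1 - p) * p)"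
    by (simp add: mult_ac)
  also have "\<dots> = ((real W - j) * (W choose j)) * p ^ j * (1 - p) ^ (W - Suc j) * ((1 - p) * p)"
    by (simp only: C)
  also have "\<dots> = (W choose j) * p ^ j * (1 - p) ^ (W - j) * ((real W - j) * p)"
    by (simp add: Q mult_ac)
  finally show ?thesis .
next
  case False
  then show ?thesis
    by (cases "j = W") (simp_all add: binomial_eq_0)
qed

lemma binomial_term_le_mode:
  fixes W k :: nat and p :: real
  assumes "k < W"
  defines "p \<equiv> k / W"
  shows "(W choose j) * p ^ j * (1 - p) ^ (W - j) \<le> (W choose k) * p ^ k * (1 - p) ^ (W - k)"
proof -
  define b where "b j = (W choose j) * p ^ j * (1 - p) ^ (W - j)" for j
  have p: "0 \<le> p" "p < 1"
    using assms by (simp_all add: p_def)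
  have b_nonneg: "0 \<le> b i" for i
    using p by (simp add: b_def)
  have c_pos: "0 < Suc i * (1 - p)" for i
    using p by simp
  have ratio: "b (Suc i) * (Suc i * (1 - p)) = b i * ((real W - i) * p)" for i
    using binomial_term_Suc[of W i p] by (simp add: b_def)
  have "0 < W"
    using assms by simp
  then have ratio_terms: "Suc i * (1 - p) = real i + 1 - i * p - p" "(real W - i) * p = k - i * p" for i
    by (simp_all add: p_def field_simps)
  have "b j \<le> b k"
  proof (rule le_at_peak)
    fix i assume "i < k"
    then have "Suc i * (1 - p) \<le> (real W - i) * p"
      using p unfolding ratio_terms by linarith
    then have "b i * (Suc i * (1 - p)) \<le> b (Suc i) * (Suc i * (1 - p))"
      unfolding ratio by (rule mult_left_mono) (rule b_nonneg)
    then show "b i \<le> b (Suc i)"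
      using c_pos by (simp add: mult_le_cancel_right)
  next
    fix i assume "k \<le> i"
    then have "(real W - i) * p \<le> Suc i * (1 - p)"
      using p unfolding ratio_terms by linarith
    then have "b (Suc i) * (Suc i * (1 - p)) \<le> b i * (Suc i * (1 - p))"
      unfolding ratio by (rule mult_left_mono) (rule b_nonneg)
    then show "b (Suc i) \<le> b i"
      using c_pos by (simp add: mult_le_cancel_right)
  qed
  then show ?thesis
    by (simp add: b_def)
qed

lemma entropy_powr_le_choose:
  assumes "0 < W" "k \<le> W"
  shows "2 powr (W * h (k / W)) \<le> (real W + 1) * (W choose k)"
proof (cases "k = 0 \<or> k = W")
  case True
  then show ?thesis
    using assms by (auto simp: h_def)
next
  case False
  define p where "p = real k / W"
  have k: "0 < k" "k < W" and p: "0 < p" "p < 1"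
    using assms False by (auto simp: p_def)
  have "1 = (\<Sum>j\<le>W. (W choose j) * p ^ j * (1 - p) ^ (W - j))"
    using binomial_ring[of p "1 - p" W] by (simp add: mult_ac)
  also have "\<dots> \<le> (\<Sum>j\<le>W. (W choose k) * p ^ k * (1 - p) ^ (W - k))"
    using k by (intro sum_mono) (simp add: p_def binomial_term_le_mode)
  also have "\<dots> = (real W + 1) * (W choose k) * (p ^ k * (1 - p) ^ (W - k))"
    by (simp add: algebra_simps)
  also have "\<dots> = (real W + 1) * (W choose k) * 2 powr (- (W * h p))"
  proof -
    have "real k = W * p" "real (W - k) = W * (1 - p)"
      using assms k by (simp_all add: p_def of_nat_diff field_simps)
    then show ?thesis
      using p by (simp add: bernoulli_weight_eq_powr h_eq algebra_simps)
  qed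
  finally have "1 \<le> (real W + 1) * (W choose k) * 2 powr (- (W * h p))" .
  then show ?thesis
    by (simp add: p_def powr_minus field_simps)
qed

section \<open>Bounding the number of messages\<close>

lemma card_le_card_if_disjoint_hits:
  assumes "disjoint_family_on Y I" "finite L" "\<And>i. i \<in> I \<Longrightarrow> Y i \<inter> L \<noteq> {}"
  shows "card I \<le> card L"
proof -
  have "\<forall>i\<in>I. \<exists>y. y \<in> Y i \<inter> L"
    using assms(3) by blast
  then obtain g where g: "\<forall>i\<in>I. g i \<in> Y i \<inter> L"
    by (rule bchoice[THEN exE])
  have "inj_on g I"
  proof (rule inj_onI)
    fix i j assume "i \<in> I" "j \<in> I" "g i = g j"
    then have "Y i \<inter> Y j \<noteq> {}"
      using g \<open>i \<in> I\<close> \<open>j \<in> I\<close> by auto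
    then show "i = j"
      using assms(1) \<open>i \<in> I\<close> \<open>j \<in> I\<close> unfolding disjoint_family_on_def by blast
  qed
  then show ?thesis
    by (rule card_inj_on_le) (use g assms(2) in auto)
qed

lemma card_mult_le_card_if_disjoint_large:
  assumes "disjoint_family_on Y I" "finite U" "\<And>i. i \<in> I \<Longrightarrow> Y i \<subseteq> U"
    and "\<And>i. i \<in> I \<Longrightarrow> D \<le> card (Y i)"
  shows "card I * D \<le> card U"
proof (cases "finite I")
  case True
  have "card I * D = (\<Sum>i\<in>I. D)"
    by simp
  also have "\<dots> \<le> (\<Sum>i\<in>I. card (Y i))"
    using assms(4) by (rule sum_mono)
  also have "\<dots> = card (\<Union>i\<in>I. Y i)"
    using assms(1) True finite_subset[OF assms(3) \<open>finite U\<close>]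
    by (intro card_UN_disjoint[symmetric]) (auto simp: disjoint_family_on_def)
  also have "\<dots> \<le> card U"
    using assms by (intro card_mono) auto
  finally show ?thesis .
qed simp

lemma card_le_by_packing:
  fixes Y :: "nat \<Rightarrow> 'a set"
  assumes "finite U" "finite L" "0 < D" "disjoint_family_on Y {..<K}"
    and "\<And>m. m < K \<Longrightarrow> Y m \<subseteq> U"
    and "\<And>m. m < K \<Longrightarrow> D \<le> card (Y m) \<or> Y m \<inter> L \<noteq> {}"
  shows "real K \<le> card L + card U / D"
proof -
  define B where "B = {m. m < K \<and> D \<le> card (Y m)}"
  define S where "S = {m. m < K \<and> \<not> D \<le> card (Y m)}"
  have "{..<K} = B \<union> S"
    by (auto simp: B_def S_def)
  moreover have "card (B \<union> S) = card B + card S"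
    by (rule card_Un_disjoint) (auto simp: B_def S_def)
  ultimately have K_eq: "K = card B + card S"
    by (metis card_lessThan)
  have "disjoint_family_on Y S"
    by (rule disjoint_family_on_mono[OF _ assms(4)]) (auto simp: S_def)
  then have "card S \<le> card L"
    by (rule card_le_card_if_disjoint_hits[OF _ \<open>finite L\<close>]) (use assms(6) in \<open>auto simp: S_def\<close>)
  have "disjoint_family_on Y B"
    by (rule disjoint_family_on_mono[OF _ assms(4)]) (auto simp: B_def)
  then have "card B * D \<le> card U"
    by (rule card_mult_le_card_if_disjoint_large[OF _ \<open>finite U\<close>]) (use assms(5) in \<open>auto simp: B_def\<close>)
  then have "real (card B) \<le> card U / D"
    using \<open>0 < D\<close> by (simp add: le_divide_eq flip: of_nat_mult)
  then show ?thesis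
    using K_eq \<open>card S \<le> card L\<close> by simp
qed

lemma disjoint_outputs_after_zeros:
  assumes "successful n t K c" "z \<le> n" "z \<le> t"
  shows "disjoint_family_on (\<lambda>m. outputs (\<lambda>zs. c m (replicate z False @ zs)) (n - z) (t - z)) {..<K}"
  unfolding disjoint_family_on_def
proof (intro ballI impI)
  fix m m' assume "m \<in> {..<K}" "m' \<in> {..<K}" "m \<noteq> m'"
  then have "outputs (c m) n t \<inter> outputs (c m') n t = {}"
    using assms(1) by (simp add: successful_def Yset_eq_outputs)
  then show "outputs (\<lambda>zs. c m (replicate z False @ zs)) (n - z) (t - z)
      \<inter> outputs (\<lambda>zs. c m' (replicate z False @ zs)) (n - z) (t - z) = {}"
    using append_zeros_outputs[OF assms(2,3), of "c m"] append_zeros_outputs[OF assms(2,3), of "c m'"]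
    by blast
qed

lemma successful_card_le:
  fixes v :: real
  assumes "successful n t K c" and "z \<le> n" "z \<le> t" "k \<le> t - z" "k \<le> W"
    and "0 < v" "v \<le> 1/2" "W < v * real (n - z) + 1"
  shows "K \<le> 2 powr (real (n - z) * h v) + 2 ^ (n - z) / (W choose k)"
proof -
  define N where "N = n - z"
  define f where "f m = (\<lambda>zs. c m (replicate z False @ zs))" for m
  define Y where "Y m = outputs (f m) N (t - z)" for m
  define L where "L = {ys. length ys = N \<and> weight ys \<le> v * N}"
  have disj: "disjoint_family_on Y {..<K}"
    unfolding Y_def f_def N_def using assms(1-3) by (rule disjoint_outputs_after_zeros)
  have big_or_hits: "W choose k \<le> card (Y m) \<or> Y m \<inter> L \<noteq> {}" for m
  proof (cases "\<forall>ys\<in>Y m. W \<le> ones_sent (f m) ys")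
    case True
    then have "W choose k \<le> card (outputs (f m) N k)"
      using outputs_mono[OF \<open>k \<le> t - z\<close>] by (intro choose_le_card_outputs) (auto simp: Y_def)
    also have "\<dots> \<le> card (Y m)"
      using outputs_mono[OF \<open>k \<le> t - z\<close>] by (intro card_mono) (simp_all add: Y_def finite_outputs)
    finally show ?thesis by simp
  next
    case False
    then obtain ys where ys: "ys \<in> Y m" "ones_sent (f m) ys < W"
      by auto
    then have "weight ys < W"
      using weight_le_ones_sent[of "f m" ys] by (simp add: Y_def outputs_def)
    then have "ys \<in> L"
      using ys assms by (simp add: Y_def outputs_def L_def N_def)
    then show ?thesis
      using ys by blast
  qed
  have "K \<le> card L + card {ys :: bool list. length ys = N} / (W choose k)"
    by (rule card_le_by_packing[OF _ _ _ disj _ big_or_hits])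
      (auto simp: L_def Y_def outputs_def finite_length_eq_bool \<open>k \<le> W\<close>)
  also have "\<dots> \<le> 2 powr (N * h v) + 2 ^ N / (W choose k)"
    using card_low_weight_le[OF \<open>0 < v\<close> \<open>v \<le> 1/2\<close>, of N]
    by (simp add: L_def card_length_eq_bool)
  finally show ?thesis
    by (simp add: N_def)
qed

lemma successful_card_le_entropy:
  fixes v :: real and W k :: nat
  assumes succ: "successful n t K c" and "z \<le> n" "z \<le> t" "k \<le> t - z" "k \<le> W" "0 < W"
    and "0 < v" "v \<le> 1/2" "v * real (n - z) \<le> W" "W < v * real (n - z) + 1"
  shows "K \<le> (real W + 2) * 2 powr (real (n - z) * max (h v) (1 - v * h (k / W)))"
proof -
  define N where "N = real (n - z)"
  define q where "q = real k / real W"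
  define M where "M = max (h v) (1 - v * h q)"
  have "2 powr (W * h q) / (real W + 1) \<le> W choose k"
    using entropy_powr_le_choose[OF \<open>0 < W\<close> \<open>k \<le> W\<close>]
    by (simp add: q_def divide_le_eq mult.commute)
  then have "2 ^ (n - z) / (W choose k) \<le> 2 ^ (n - z) / (2 powr (W * h q) / (real W + 1))"
    using \<open>k \<le> W\<close> by (intro divide_left_mono) auto
  also have "\<dots> = (real W + 1) * 2 powr (N - W * h q)"
    by (simp add: N_def powr_diff powr_realpow)
  also have "\<dots> \<le> (real W + 1) * 2 powr (N * M)"
  proof -
    have "v * N * h q \<le> W * h q"
      using assms h_nonneg by (simp add: N_def mult_right_mono)
    then have "N - W * h q \<le> N * (1 - v * h q)"
      by (simp add: algebra_simps)
    also have "\<dots> \<le> N * M"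
      by (simp add: M_def N_def mult_left_mono)
    finally show ?thesis by simp
  qed
  finally have "2 ^ (n - z) / (W choose k) \<le> (real W + 1) * 2 powr (N * M)" .
  moreover have "2 powr (N * h v) \<le> 2 powr (N * M)"
    by (simp add: M_def N_def mult_left_mono)
  moreover have "K \<le> 2 powr (N * h v) + 2 ^ (n - z) / (W choose k)"
    unfolding N_def using assms by (intro successful_card_le) auto
  ultimately have "K \<le> 2 powr (N * M) + (real W + 1) * 2 powr (N * M)"
    by linarith
  then show ?thesis
    by (simp add: M_def N_def q_def algebra_simps)
qed

lemma Mmax_bounds:
  fixes B :: real
  assumes "\<And>K c. successful n t K c \<Longrightarrow> real K \<le> B"
  shows "1 \<le> Mmax n t" "Mmax n t \<le> B"
proof -
  let ?X = "{K. \<exists>c. successful n t K c}"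
  have "?X \<subseteq> {..nat \<lceil>B\<rceil>}"
    using assms by (force simp: le_nat_iff ceiling_le_iff le_ceiling_iff)
  then have "finite ?X"
    by (rule finite_subset) simp
  moreover have "1 \<in> ?X"
    by (auto simp: successful_def)
  ultimately show "1 \<le> Mmax n t" "Mmax n t \<le> B"
    unfolding Mmax_def using assms Max_in[of ?X] by (auto intro: Max_ge)
qed

lemma log_Mmax_le:
  fixes v :: real and W k :: nat
  assumes "z \<le> n" "z \<le> t" "k \<le> t - z" "k \<le> W" "0 < W" "0 < v" "v \<le> 1/2"
    and "v * real (n - z) \<le> W" "W < v * real (n - z) + 1"
  shows "log 2 (Mmax n t) \<le> log 2 (n + 3) + real (n - z) * max (h v) (1 - v * h (k / W))"
proof -
  define B where "B = (real n + 3) * 2 powr (real (n - z) * max (h v) (1 - v * h (k / W)))"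
  have "v * real (n - z) \<le> real (n - z)"
    using assms by (simp add: mult_left_le_one_le)
  then have "real W + 2 \<le> real n + 3"
    using assms by linarith
  then have "real K \<le> B" if "successful n t K c" for K c
    using successful_card_le_entropy[OF that assms] unfolding B_def
    by (meson mult_right_mono order_trans powr_ge_zero)
  then have "1 \<le> Mmax n t" "Mmax n t \<le> B"
    by (rule Mmax_bounds, blast)+
  then have "log 2 (Mmax n t) \<le> log 2 B"
    by simp
  then show ?thesis
    by (simp add: B_def log_mult)
qed

section \<open>Asymptotics\<close>

lemma LIMSEQ_divide_of_bounded_gap:
  fixes x :: "nat \<Rightarrow> real" and a C :: real
  assumes "\<And>n. \<bar>x n - a * n\<bar> \<le> C"
  shows "(\<lambda>n. x n / n) \<longlonglongrightarrow> a"
proof (rule tendsto_sandwich)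
  show "(\<lambda>n. a - C / n) \<longlonglongrightarrow> a" "(\<lambda>n. a + C / n) \<longlonglongrightarrow> a"
    using tendsto_diff[OF tendsto_const lim_const_over_n] tendsto_add[OF tendsto_const lim_const_over_n]
    by simp_all
  have "\<bar>x n / n - a\<bar> \<le> C / n" if "0 < n" for n
  proof -
    have "\<bar>x n / n - a\<bar> = \<bar>x n - a * n\<bar> / n"
      using that by (simp add: field_simps)
    then show ?thesis
      using assms[of n] by (simp add: divide_right_mono)
  qed
  then have "a - C / n \<le> x n / n \<and> x n / n \<le> a + C / n" if "0 < n" for n
    using that by (simp add: abs_diff_le_iff)
  then show "\<forall>\<^sub>F n in sequentially. a - C / n \<le> x n / n"
    "\<forall>\<^sub>F n in sequentially. x n / n \<le> a + C / n"
    by (auto intro!: eventually_sequentiallyI[of 1])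
qed

lemma nat_ceiling_bounds: "0 \<le> x \<Longrightarrow> x \<le> real (nat \<lceil>x\<rceil>) \<and> real (nat \<lceil>x\<rceil>) < x + 1"
  by linarith

lemma nat_floor_bounds: "0 \<le> x \<Longrightarrow> x - 1 < real (nat \<lfloor>x\<rfloor>) \<and> real (nat \<lfloor>x\<rfloor>) \<le> x"
  by linarith

lemma rounded_parameters:
  fixes \<tau> \<tau>' v :: real and n t z W :: nat
  assumes "0 \<le> \<tau>'" "\<tau>' \<le> \<tau>" "\<tau> < 1" "0 < v" "v \<le> 1"
    and t_def: "t = nat \<lceil>\<tau> * n\<rceil>" and z_def: "z = nat \<lfloor>\<tau>' * n\<rfloor>"
    and W_def: "W = nat \<lceil>v * real (n - z)\<rceil>"
  shows "z \<le> t" "z \<le> n" "v * real (n - z) \<le> W" "W < v * real (n - z) + 1"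
    "\<bar>real (t - z) - (\<tau> - \<tau>') * n\<bar> \<le> 2" "\<bar>real (n - z) - (1 - \<tau>') * n\<bar> \<le> 1"
    "\<bar>real W - v * (1 - \<tau>') * n\<bar> \<le> 2" "0 < n \<Longrightarrow> 0 < W"
proof -
  have t: "\<tau> * n \<le> t" "t < \<tau> * n + 1"
    using assms nat_ceiling_bounds[of "\<tau> * n"] by (simp_all add: t_def)
  have z: "\<tau>' * n - 1 < z" "z \<le> \<tau>' * n"
    using assms nat_floor_bounds[of "\<tau>' * n"] by (simp_all add: z_def)
  have "\<tau>' * n \<le> \<tau> * n" "\<tau>' * n \<le> n"
    using assms by (simp_all add: mult_right_mono mult_left_le_one_le)
  then show "z \<le> t" "z \<le> n"
    using t z by linarith+
  then have diffs: "real (t - z) = real t - z" "real (n - z) = real n - z"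
    by (simp_all add: of_nat_diff)
  show "\<bar>real (t - z) - (\<tau> - \<tau>') * n\<bar> \<le> 2" "\<bar>real (n - z) - (1 - \<tau>') * n\<bar> \<le> 1"
    using t z unfolding diffs by (simp_all add: algebra_simps abs_le_iff)
  show W: "v * real (n - z) \<le> W" "W < v * real (n - z) + 1"
    using assms nat_ceiling_bounds[of "v * real (n - z)"] by (simp_all add: W_def)
  have "\<bar>v * real (n - z) - v * (1 - \<tau>') * n\<bar> \<le> v * 1"
    using \<open>\<bar>real (n - z) - (1 - \<tau>') * n\<bar> \<le> 1\<close> assms
    by (simp add: right_diff_distrib[symmetric] abs_mult mult_left_mono mult.assoc)
  then show "\<bar>real W - v * (1 - \<tau>') * n\<bar> \<le> 2"
    using W assms by (simp add: abs_le_iff) linarith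
  assume "0 < n"
  then have "\<tau>' * n < n"
    using assms by simp
  then have "real z < real n"
    using z by linarith
  then have "0 < v * real (n - z)"
    using assms by (simp add: of_nat_diff)
  then show "0 < W"
    using W by linarith
qed

lemma Rate_le_of_eventually_le:
  fixes \<tau> L :: real and u :: "nat \<Rightarrow> real"
  assumes "\<forall>\<^sub>F n in sequentially. log 2 (Mmax n (nat \<lceil>\<tau> * n\<rceil>)) / n \<le> u n"
    and "u \<longlonglongrightarrow> L"
  shows "Rate \<tau> \<le> ereal L"
proof -
  have "Rate \<tau> \<le> limsup (\<lambda>n. ereal (u n))"
    unfolding Rate_def using assms(1) by (intro Limsup_mono) (simp add: eventually_mono)
  also have "\<dots> = ereal L"
    using assms(2) by (intro lim_imp_Limsup) (simp_all add: tendsto_ereal)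
  finally show ?thesis .
qed

lemma LIMSEQ_rounded_ratio:
  fixes \<tau> \<tau>' v :: real and t z W :: "nat \<Rightarrow> nat"
  assumes "0 \<le> \<tau>'" "\<tau>' \<le> \<tau>" "\<tau> < 1" "0 < v" "v \<le> 1"
    and t_def: "\<And>n. t n = nat \<lceil>\<tau> * n\<rceil>" and z_def: "\<And>n. z n = nat \<lfloor>\<tau>' * n\<rfloor>"
    and W_def: "\<And>n. W n = nat \<lceil>v * real (n - z n)\<rceil>"
  shows "(\<lambda>n. min (t n - z n) (W n div 2) / W n) \<longlonglongrightarrow> min ((\<tau> - \<tau>') / (v * (1 - \<tau>'))) (1/2)"
proof -
  define b where "b = v * (1 - \<tau>')"
  have "0 < b"
    using assms by (simp add: b_def)
  note rounded = rounded_parameters[OF assms(1-5) t_def z_def W_def]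
  have gap_W: "\<bar>real (W n) - b * n\<bar> \<le> 2" for n
    using rounded(7)[of n] by (simp add: b_def)
  have gap_half: "\<bar>real (W n div 2) - b / 2 * n\<bar> \<le> 2" for n
  proof -
    have "2 * (W n div 2) \<le> W n" "W n \<le> 2 * (W n div 2) + 1"
      by linarith+
    then have "2 * real (W n div 2) \<le> W n" "real (W n) \<le> 2 * real (W n div 2) + 1"
      by linarith+
    then show ?thesis
      using gap_W[of n] by (simp add: abs_le_iff)
  qed
  have lims: "(\<lambda>n. real (t n - z n) / n) \<longlonglongrightarrow> \<tau> - \<tau>'"
    "(\<lambda>n. real (W n div 2) / n) \<longlonglongrightarrow> b / 2" "(\<lambda>n. real (W n) / n) \<longlonglongrightarrow> b"
    by (rule LIMSEQ_divide_of_bounded_gap, rule rounded(5) gap_half gap_W)+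
  have lim_ratio: "(\<lambda>n. min (real (t n - z n) / n) (real (W n div 2) / n) / (real (W n) / n))
      \<longlonglongrightarrow> min (\<tau> - \<tau>') (b / 2) / b"
    by (rule tendsto_divide[OF tendsto_min[OF lims(1,2)] lims(3)]) (use \<open>0 < b\<close> in simp)
  have limit_eq: "min (\<tau> - \<tau>') (b / 2) / b = min ((\<tau> - \<tau>') / b) (1/2)"
    using \<open>0 < b\<close> by (simp add: min_divide_distrib_right)
  have ratio_eq: "\<forall>\<^sub>F n in sequentially.
      min (real (t n - z n) / n) (real (W n div 2) / n) / (real (W n) / n)
        = min (t n - z n) (W n div 2) / W n"
  proof (intro eventually_sequentiallyI[of 1])
    fix n :: nat assume "1 \<le> n"
    have "min (real (t n - z n) / n) (real (W n div 2) / n) = min (t n - z n) (W n div 2) / n"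
      by (simp add: of_nat_min min_divide_distrib_right)
    then show "min (real (t n - z n) / n) (real (W n div 2) / n) / (real (W n) / n)
        = min (t n - z n) (W n div 2) / W n"
      using \<open>1 \<le> n\<close> by simp
  qed
  show ?thesis
    using Lim_transform_eventually[OF lim_ratio ratio_eq] unfolding limit_eq by (simp add: b_def)
qed

lemma Rate_le_entropy_bound:
  fixes \<tau> \<tau>' v :: real
  assumes "0 \<le> \<tau>'" "\<tau>' \<le> \<tau>" "\<tau> < 1" "0 < v" "v \<le> 1/2"
  shows "Rate \<tau> \<le> ereal ((1 - \<tau>') * max (h v) (1 - v * h (min ((\<tau> - \<tau>') / (v * (1 - \<tau>'))) (1/2))))"
proof -
  define t where "t n = nat \<lceil>\<tau> * n\<rceil>" for n :: nat
  define z where "z n = nat \<lfloor>\<tau>' * n\<rfloor>" for n :: nat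
  define W where "W n = nat \<lceil>v * real (n - z n)\<rceil>" for n
  define k where "k n = min (t n - z n) (W n div 2)" for n
  define q where "q = min ((\<tau> - \<tau>') / (v * (1 - \<tau>'))) (1/2)"
  define M where "M n = max (h v) (1 - v * h (k n / W n))" for n
  have "v \<le> 1"
    using assms by simp
  note rounded = rounded_parameters[OF assms(1-4) \<open>v \<le> 1\<close> t_def z_def W_def]
  have "0 \<le> q" "q < 1"
    using assms by (auto simp: q_def)
  then have "(\<lambda>n. h (k n / W n)) \<longlonglongrightarrow> h q"
    using LIMSEQ_rounded_ratio[OF assms(1-4) \<open>v \<le> 1\<close> t_def z_def W_def]
    by (intro isCont_tendsto_compose[OF isCont_h]) (simp_all add: k_def q_def)
  moreover have "(\<lambda>n. log 2 (real n + 3) / n) \<longlonglongrightarrow> 0"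
    unfolding log_def by real_asymp
  moreover have "(\<lambda>n. real (n - z n) / n) \<longlonglongrightarrow> 1 - \<tau>'"
    by (rule LIMSEQ_divide_of_bounded_gap, rule rounded(6))
  ultimately have "(\<lambda>n. log 2 (real n + 3) / n + real (n - z n) / n * M n)
      \<longlonglongrightarrow> 0 + (1 - \<tau>') * max (h v) (1 - v * h q)"
    unfolding M_def by (intro tendsto_intros)
  moreover have "\<forall>\<^sub>F n in sequentially.
      log 2 (Mmax n (t n)) / n \<le> log 2 (real n + 3) / n + real (n - z n) / n * M n"
  proof (intro eventually_sequentiallyI[of 1])
    fix n :: nat assume "1 \<le> n"
    then have "log 2 (Mmax n (t n)) \<le> log 2 (real n + 3) + real (n - z n) * M n"
      unfolding M_def using rounded[of n] assms by (intro log_Mmax_le) (auto simp: k_def)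
    from divide_right_mono[OF this, of n]
    show "log 2 (Mmax n (t n)) / n \<le> log 2 (real n + 3) / n + real (n - z n) / n * M n"
      by (simp add: add_divide_distrib)
  qed
  ultimately show ?thesis
    using Rate_le_of_eventually_le[of \<tau>] by (simp add: t_def q_def)
qed

section \<open>Admissible rates\<close>

lemma ereal_le_INF_real:
  assumes "S \<noteq> {}" "\<And>s. s \<in> S \<Longrightarrow> y \<le> ereal (f s)"
  shows "y \<le> ereal (INF s\<in>S. f s)"
proof (cases y)
  case (real x)
  have "x \<le> (INF s\<in>S. f s)"
    using assms real by (intro cINF_greatest) auto
  then show ?thesis using real by simp
next
  case PInf
  obtain s where "s \<in> S"
    using assms(1) by blast
  then show ?thesis
    using assms(2)[of s] PInf by simp
qed simp

lemma ereal_le_of_dense_bound: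
  fixes s u :: real
  assumes "y \<le> ereal u" "\<And>w. s < w \<Longrightarrow> w < u \<Longrightarrow> y \<le> ereal w"
  shows "y \<le> ereal s"
proof (cases "s < u")
  case True
  show ?thesis
  proof (rule dense_ge_bounded)
    show "ereal s < ereal u" using True by simp
    fix w assume "ereal s < w" "w < ereal u"
    then obtain w' where "w = ereal w'" "s < w'" "w' < u"
      by (cases w) auto
    then show "y \<le> w" using assms(2) by simp
  qed
qed (use assms(1) in \<open>simp add: order_trans\<close>)

lemma Rate_le_Sup_admissible:
  assumes "0 \<le> \<tau>'" "\<tau>' \<le> \<tau>" "\<tau> < 1"
  shows "Rate \<tau> \<le> ereal (Sup {r. admissible \<tau> \<tau>' r})"
proof -
  define A where "A = {r. admissible \<tau> \<tau>' r}"
  have "0 \<in> A"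
    unfolding A_def admissible_def by (intro CollectI conjI exI[of _ 0]) (auto simp: h_0)
  moreover have "bdd_above A"
    unfolding A_def admissible_def by (rule bdd_aboveI[of _ 1]) auto
  ultimately have "0 \<le> Sup A"
    by (rule cSup_upper)
  have "0 < 1 - \<tau>'"
    using assms by simp
  show ?thesis
    unfolding A_def[symmetric]
  proof (rule ereal_le_of_dense_bound)
    show "Rate \<tau> \<le> ereal (1 - \<tau>')"
      using Rate_le_entropy_bound[OF assms, of "1/2"] h_nonneg by (simp add: h_half)
    fix w assume w: "Sup A < w" "w < 1 - \<tau>'"
    then have "w \<notin> A"
      using \<open>bdd_above A\<close> cSup_upper by fastforce
    have "continuous_on {0..1/2} h"
      by (intro continuous_at_imp_continuous_on ballI isCont_h) auto
    moreover have "0 \<le> w / (1 - \<tau>')" "w / (1 - \<tau>') \<le> 1"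
      using w \<open>0 \<le> Sup A\<close> \<open>0 < 1 - \<tau>'\<close> by simp_all
    ultimately obtain v where v: "0 \<le> v" "v \<le> 1/2" "h v = w / (1 - \<tau>')"
      using IVT'[of h 0 "w / (1 - \<tau>')" "1/2"] by (auto simp: h_half h_0)
    then have "0 < v"
      using w \<open>0 \<le> Sup A\<close> \<open>0 < 1 - \<tau>'\<close> by (cases "v = 0") (auto simp: h_0)
    have "h v * (1 - \<tau>') = w"
      using v \<open>0 < 1 - \<tau>'\<close> by simp
    moreover have "0 \<le> w" "w \<le> 1"
      using w \<open>0 \<le> Sup A\<close> assms by linarith+
    ultimately have "\<not> h v \<le> 1 - v * h (min ((\<tau> - \<tau>') / (v * (1 - \<tau>'))) (1/2))"
      using \<open>w \<notin> A\<close> v unfolding A_def admissible_def by blast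
    then show "Rate \<tau> \<le> ereal w"
      using Rate_le_entropy_bound[OF assms \<open>0 < v\<close> \<open>v \<le> 1/2\<close>] \<open>h v * (1 - \<tau>') = w\<close>
      by (simp add: mult.commute)
  qed
qed

theorem theorem3:
  fixes \<tau> :: real
  assumes "0 < \<tau>" and "\<tau> < 1"
  shows "Rate \<tau> \<le> ereal (Rbar \<tau>)"
  unfolding Rbar_def using assms
  by (intro ereal_le_INF_real Rate_le_Sup_admissible) auto

end
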